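(* Assume the standing setup below and let $\rho\ge0$. If $\mathcal{G}$ is a quasi-concave hill, then $\mathcal{NE}_\rho$ is a singleton, and its unique element is the unique optimizer of the problem $\max_{\mathbf{x}} U(\mathbf{x})$ subject to $\mathbf{x}\in\mathcal{S}_\rho$, where $U(\mathbf{x})=\sum_{i\in\mathcal{V}}[p_i(\mathbf{x}_i)-p_i(0)]$.
   Context: Standing setup: $\mathcal{G}=(\mathcal{V},\mathcal{E})$ is a finite, connected, undirected graph; $\mathcal{N}^i$ denotes the set of neighbours of node $i$. For $\rho\ge0$, $\mathcal{S}_\rho=\{\mathbf{x}\in\mathbb{R}^{|\mathcal{V}|}:\mathbf{x}\ge 0,\ \sum_{i\in\mathcal{V}}\mathbf{x}_i=\rho\}$, and $\mathrm{supp}(\mathbf{x})=\{i:\mathbf{x}_i\neq 0\}$. For each node $i$, $p_i:[0,\infty)\to\mathbb{R}$ is twice continuously differentiable and strictly concave, and $u_i:=p_i'$ (right derivative at $0$), so each $u_i$ is strictly decreasing. The maximum payoff density parameter (MPDP) of node $i$ is $\mathbf{a}_i:=u_i(0)$. The set of Nash equilibria is $\mathcal{NE}_\rho=\{\mathbf{x}\in\mathcal{S}_\rho: u_i(\mathbf{x}_i)\ge u_j(\mathbf{x}_j)\ \forall j\in\mathcal{N}^i,\ \forall i\in\mathrm{supp}(\mathbf{x})\}$. A path $\pi(1),\dots,\pi(n)$ in $\mathcal{G}$ (distinct nodes, consecutive ones adjacent) is a path with quasi-concave MPDP's if for all $1\le k\le m\le l\le n$, $\mathbf{a}_{\pi(m)}\ge\min\{\mathbf{a}_{\pi(k)},\mathbf{a}_{\pi(l)}\}$.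 $\mathcal{G}$ is a quasi-concave hill (QCH) if between every two distinct nodes there exists a path with quasi-concave MPDP's. *)

theory Defs
  imports "HOL-Analysis.Analysis"
begin

definition graph_connected :: "'a set \<Rightarrow> ('a \<Rightarrow> 'a \<Rightarrow> bool) \<Rightarrow> bool" where
  "graph_connected V E \<longleftrightarrow>
     (\<forall>i\<in>V. \<forall>j\<in>V. (\<lambda>a b. a \<in> V \<and> b \<in> V \<and> E a b)\<^sup>*\<^sup>* i j)"

definition neighbours :: "'a set \<Rightarrow> ('a \<Rightarrow> 'a \<Rightarrow> bool) \<Rightarrow> 'a \<Rightarrow> 'a set" where
  "neighbours V E i = {j \<in> V. E i j}"

definition strictly_concave_on :: "real set \<Rightarrow> (real \<Rightarrow> real) \<Rightarrow> bool" where
  "strictly_concave_on S f \<longleftrightarrow>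
     (\<forall>x\<in>S. \<forall>y\<in>S. \<forall>t::real. x \<noteq> y \<and> 0 < t \<and> t < 1 \<longrightarrow>
        f ((1 - t) * x + t * y) > (1 - t) * f x + t * f y)"

text \<open>Strategy profiles are functions 'a => real, zero outside V (elements of R^V).\<close>
definition strategy_simplex :: "'a set \<Rightarrow> real \<Rightarrow> ('a \<Rightarrow> real) set" where
  "strategy_simplex V \<rho> = {x. (\<forall>i\<in>V. 0 \<le> x i) \<and> (\<forall>i. i \<notin> V \<longrightarrow> x i = 0) \<and> (\<Sum>i\<in>V. x i) = \<rho>}"

definition support_on :: "'a set \<Rightarrow> ('a \<Rightarrow> real) \<Rightarrow> 'a set" where
  "support_on V x = {i \<in> V. x i \<noteq> 0}"

definition nash_eq :: "'a set \<Rightarrow> ('a \<Rightarrow> 'a \<Rightarrow> bool) \<Rightarrow> ('a \<Rightarrow> real \<Rightarrow> real) \<Rightarrow> real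
                        \<Rightarrow> ('a \<Rightarrow> real) set" where
  "nash_eq V E u \<rho> = {x \<in> strategy_simplex V \<rho>.
      \<forall>i\<in>support_on V x. \<forall>j\<in>neighbours V E i. u i (x i) \<ge> u j (x j)}"

definition is_path :: "'a set \<Rightarrow> ('a \<Rightarrow> 'a \<Rightarrow> bool) \<Rightarrow> 'a list \<Rightarrow> bool" where
  "is_path V E ps \<longleftrightarrow> ps \<noteq> [] \<and> distinct ps \<and> set ps \<subseteq> V \<and>
     (\<forall>k. Suc k < length ps \<longrightarrow> E (ps ! k) (ps ! Suc k))"

definition quasi_concave_path :: "('a \<Rightarrow> real) \<Rightarrow> 'a list \<Rightarrow> bool" where
  "quasi_concave_path a ps \<longleftrightarrow>
     (\<forall>k m l. k \<le> m \<and> m \<le> l \<and> l < length ps \<longrightarrow>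
        a (ps ! m) \<ge> min (a (ps ! k)) (a (ps ! l)))"

definition quasi_concave_hill :: "'a set \<Rightarrow> ('a \<Rightarrow> 'a \<Rightarrow> bool) \<Rightarrow> ('a \<Rightarrow> real) \<Rightarrow> bool" where
  "quasi_concave_hill V E a \<longleftrightarrow>
     (\<forall>i\<in>V. \<forall>j\<in>V. i \<noteq> j \<longrightarrow>
        (\<exists>ps. is_path V E ps \<and> hd ps = i \<and> last ps = j \<and> quasi_concave_path a ps))"

end

theory Submission
  imports Defs
begin

text \<open>The welfare \<open>U\<close> is continuous on the compact simplex, so it attains its maximum, and a
  maximiser satisfies the KKT conditions: every loaded node has the largest marginal payoff
  \<open>u\<^sub>i(x\<^sub>i)\<close> among all nodes. By the strict tangent inequality for the concave payoffs, a KKT point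
  is the unique maximiser. KKT points are Nash equilibria. Conversely, suppose at a Nash
  equilibrium a loaded node \<open>i\<close> had a smaller marginal payoff than a node \<open>j\<close>. Both MPDPs exceed
  \<open>u\<^sub>i(x\<^sub>i)\<close>, hence so does the MPDP of every node on a quasi-concave path from \<open>i\<close> to \<open>j\<close>. A node
  whose marginal payoff lies below its MPDP carries load, so the Nash condition passes the bound
  \<open>u\<^sub>k(x\<^sub>k) \<le> u\<^sub>i(x\<^sub>i)\<close> along the path up to \<open>j\<close>, a contradiction.\<close>

lemma DERIV_compose_affine:
  fixes f :: "real \<Rightarrow> real"
  assumes "(f has_real_derivative D) (at (c + t * d) within A)"
    and "(\<lambda>s. c + s * d) ` T \<subseteq> A"
  shows "((\<lambda>s. f (c + s * d)) has_real_derivative D * d) (at t within T)"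
proof -
  have "(f has_real_derivative D) (at (c + t * d) within (\<lambda>s. c + s * d) ` T)"
    using assms by (rule DERIV_subset)
  moreover have "((\<lambda>s. c + s * d) has_real_derivative d) (at t within T)"
    by (auto intro!: derivative_eq_intros)
  ultimately show ?thesis
    using DERIV_image_chain by (fastforce simp: o_def)
qed

lemma chord_le_deriv_at_0:
  fixes \<phi> :: "real \<Rightarrow> real"
  assumes der: "(\<phi> has_real_derivative D) (at 0 within {0..1})"
    and above_chord: "\<And>t. 0 < t \<Longrightarrow> t < 1 \<Longrightarrow> (1 - t) * \<phi> 0 + t * \<phi> 1 \<le> \<phi> t"
  shows "\<phi> 1 - \<phi> 0 \<le> D"
proof (rule ccontr)
  assume "\<not> \<phi> 1 - \<phi> 0 \<le> D"
  define \<psi> where "\<psi> t = \<phi> t - \<phi> 0 - t * (\<phi> 1 - \<phi> 0)" for t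
  have "(\<psi> has_real_derivative D - (\<phi> 1 - \<phi> 0)) (at 0 within {0..1})"
    unfolding \<psi>_def using der by (auto intro!: derivative_eq_intros)
  moreover have "D - (\<phi> 1 - \<phi> 0) < 0" using \<open>\<not> \<phi> 1 - \<phi> 0 \<le> D\<close> by simp
  ultimately obtain d where "d > 0"
    and dec: "\<forall>h>0. 0 + h \<in> {0..1} \<longrightarrow> h < d \<longrightarrow> \<psi> 0 > \<psi> (0 + h)"
    by (blast dest: has_real_derivative_neg_dec_right)
  define h where "h = min (d / 2) (1 / 2)"
  have "0 < h" "h < 1" "h < d" using \<open>d > 0\<close> by (auto simp: h_def)
  then have "\<psi> h < 0" using dec by (simp add: \<psi>_def)
  moreover have "0 \<le> \<psi> h"
    using above_chord[OF \<open>0 < h\<close> \<open>h < 1\<close>] by (simp add: \<psi>_def algebra_simps)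
  ultimately show False by simp
qed

lemma strictly_concave_on_tangent_le:
  fixes f f' :: "real \<Rightarrow> real"
  assumes conc: "strictly_concave_on {0..} f"
    and der: "\<And>x. 0 \<le> x \<Longrightarrow> (f has_real_derivative f' x) (at x within {0..})"
    and "0 \<le> c" "0 \<le> y"
  shows "f y \<le> f c + f' c * (y - c)"
proof (cases "y = c")
  case False
  define \<phi> where "\<phi> t = f (c + t * (y - c))" for t
  have "(\<phi> has_real_derivative f' c * (y - c)) (at 0 within {0..1})"
    unfolding \<phi>_def
  proof (rule DERIV_compose_affine)
    show "(f has_real_derivative f' c) (at (c + 0 * (y - c)) within {0..})"
      using der \<open>0 \<le> c\<close> by simp
    have "0 \<le> c + s * (y - c)" if "0 \<le> s" "s \<le> 1" for s
    proof -
      have "c + s * (y - c) = (1 - s) * c + s * y" by (simp add: algebra_simps)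
      then show ?thesis using that \<open>0 \<le> c\<close> \<open>0 \<le> y\<close> by simp
    qed
    then show "(\<lambda>s. c + s * (y - c)) ` {0..1} \<subseteq> {0..}" by auto
  qed
  moreover have "(1 - t) * \<phi> 0 + t * \<phi> 1 \<le> \<phi> t" if "0 < t" "t < 1" for t
  proof -
    have "(1 - t) * f c + t * f y < f ((1 - t) * c + t * y)"
      using conc False that assms(3,4) unfolding strictly_concave_on_def by auto
    moreover have "(1 - t) * c + t * y = c + t * (y - c)" by (simp add: algebra_simps)
    ultimately show ?thesis by (simp add: \<phi>_def)
  qed
  ultimately have "\<phi> 1 - \<phi> 0 \<le> f' c * (y - c)" by (rule chord_le_deriv_at_0)
  then show ?thesis by (simp add: \<phi>_def)
qed simp

lemma strictly_concave_on_tangent_less: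
  fixes f f' :: "real \<Rightarrow> real"
  assumes conc: "strictly_concave_on {0..} f"
    and der: "\<And>x. 0 \<le> x \<Longrightarrow> (f has_real_derivative f' x) (at x within {0..})"
    and "0 \<le> c" "0 \<le> y" "y \<noteq> c"
  shows "f y < f c + f' c * (y - c)"
proof -
  define m where "m = (1 - 1/2) * c + (1/2) * y"
  have "(1 - 1/2) * f c + (1/2) * f y < f m"
    using conc[unfolded strictly_concave_on_def, rule_format, of c y "1/2"] assms(3-5)
    by (simp add: m_def)
  then have "f c + f y < 2 * f m" by simp
  moreover have "f m \<le> f c + f' c * (m - c)"
    by (rule strictly_concave_on_tangent_le[OF conc der]) (use assms(3,4) in \<open>simp_all add: m_def\<close>)
  moreover have "2 * (f' c * (m - c)) = f' c * (y - c)" by (simp add: m_def algebra_simps)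
  ultimately show ?thesis by linarith
qed

lemma strictly_concave_on_deriv_less:
  fixes f f' :: "real \<Rightarrow> real"
  assumes conc: "strictly_concave_on {0..} f"
    and der: "\<And>x. 0 \<le> x \<Longrightarrow> (f has_real_derivative f' x) (at x within {0..})"
    and "0 \<le> s" "s < t"
  shows "f' t < f' s"
proof -
  have "f t < f s + f' s * (t - s)" "f s < f t + f' t * (s - t)"
    using strictly_concave_on_tangent_less[OF conc der] assms(3,4) by auto
  then have "0 < (f' s - f' t) * (t - s)" by (simp add: algebra_simps)
  then show ?thesis using \<open>s < t\<close> by (simp add: zero_less_mult_iff)
qed

lemma strategy_simplex_nonneg: "x \<in> strategy_simplex V \<rho> \<Longrightarrow> 0 \<le> x i"
  by (cases "i \<in> V") (auto simp: strategy_simplex_def)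

lemma strategy_simplex_nonempty:
  assumes "finite V" "V \<noteq> {}" "0 \<le> \<rho>"
  shows "strategy_simplex V \<rho> \<noteq> {}"
proof -
  obtain v where "v \<in> V" using assms(2) by blast
  then have "(\<lambda>i. if i = v then \<rho> else 0) \<in> strategy_simplex V \<rho>"
    using assms(1,3) by (auto simp: strategy_simplex_def)
  then show ?thesis by blast
qed

lemma compact_strategy_simplex:
  assumes "finite V" "0 \<le> \<rho>"
  shows "compact (strategy_simplex V \<rho>)"
proof -
  define K where "K i = (if i \<in> V then {0..\<rho>} else {0::real})" for i
  have "x i \<le> \<rho>" if "x \<in> strategy_simplex V \<rho>" "i \<in> V" for x i
    using member_le_sum[of i V x] that assms(1) by (auto simp: strategy_simplex_def)
  then have eq: "strategy_simplex V \<rho> = PiE UNIV K \<inter> {x. (\<Sum>i\<in>V. x i) = \<rho>}"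
    by (fastforce simp: strategy_simplex_def K_def PiE_iff split: if_splits)
  have "compactin (product_topology (\<lambda>i. euclidean) UNIV) (PiE UNIV K)"
    by (subst compactin_PiE) (auto simp: K_def)
  then have "compact (PiE UNIV K)"
    by (simp add: euclidean_product_topology)
  moreover have "closed {x::'a\<Rightarrow>real. (\<Sum>i\<in>V. x i) = \<rho>}"
    by (intro closed_Collect_eq continuous_on_sum continuous_intros) auto
  ultimately show ?thesis unfolding eq by blast
qed

lemma sum_fun_upd_two:
  fixes F :: "'a \<Rightarrow> 'b \<Rightarrow> 'c::ab_group_add"
  assumes "finite V" "i \<in> V" "j \<in> V" "i \<noteq> j"
  shows "(\<Sum>k\<in>V. F k ((x(i := a, j := b)) k))
       = (\<Sum>k\<in>V. F k (x k)) + (F i a - F i (x i)) + (F j b - F j (x j))"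
proof -
  have split: "(\<Sum>k\<in>V. G k) = G i + G j + (\<Sum>k\<in>V - {i, j}. G k)" for G :: "'a \<Rightarrow> 'c"
  proof -
    have "(\<Sum>k\<in>V. G k) = G i + (\<Sum>k\<in>V - {i}. G k)" using assms by (simp add: sum.remove)
    also have "(\<Sum>k\<in>V - {i}. G k) = G j + (\<Sum>k\<in>V - {i} - {j}. G k)"
      using assms by (simp add: sum.remove)
    finally show ?thesis by (simp add: Diff_insert2 [symmetric] add.assoc)
  qed
  have "(\<Sum>k\<in>V - {i, j}. F k ((x(i := a, j := b)) k)) = (\<Sum>k\<in>V - {i, j}. F k (x k))"
    by (rule sum.cong) auto
  then show ?thesis
    using split[of "\<lambda>k. F k ((x(i := a, j := b)) k)"] split[of "\<lambda>k. F k (x k)"] assms(4)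
    by (simp add: algebra_simps)
qed

lemma strategy_simplex_transfer:
  assumes "x \<in> strategy_simplex V \<rho>" "finite V" "i \<in> V" "j \<in> V" "i \<noteq> j"
    and "0 \<le> t" "t \<le> x i"
  shows "x(i := x i - t, j := x j + t) \<in> strategy_simplex V \<rho>"
  using assms sum_fun_upd_two[OF assms(2-5), of "\<lambda>_ r. r" x "x i - t" "x j + t"]
    strategy_simplex_nonneg[OF assms(1), of j]
  by (auto simp: strategy_simplex_def)

definition welfare :: "'a set \<Rightarrow> ('a \<Rightarrow> real \<Rightarrow> real) \<Rightarrow> ('a \<Rightarrow> real) \<Rightarrow> real" where
  "welfare V p x = (\<Sum>i\<in>V. p i (x i) - p i 0)"

lemma welfare_attains_max:
  assumes "finite V" "V \<noteq> {}" "0 \<le> \<rho>"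
    and cont: "\<And>i. i \<in> V \<Longrightarrow> continuous_on {0..} (p i)"
  obtains x where "x \<in> strategy_simplex V \<rho>"
    and "\<And>y. y \<in> strategy_simplex V \<rho> \<Longrightarrow> welfare V p y \<le> welfare V p x"
proof -
  have "continuous_on (strategy_simplex V \<rho>) (welfare V p)"
    unfolding welfare_def
  proof (intro continuous_on_sum continuous_on_diff continuous_on_const)
    fix i assume "i \<in> V"
    have "(\<lambda>x. x i) ` strategy_simplex V \<rho> \<subseteq> {0..}"
      using strategy_simplex_nonneg by fastforce
    then show "continuous_on (strategy_simplex V \<rho>) (\<lambda>x. p i (x i))"
      by (intro continuous_on_compose2[OF cont[OF \<open>i \<in> V\<close>]]
          continuous_on_subset[OF continuous_on_product_coordinates] subset_UNIV)
  qed
  then have "\<exists>x\<in>strategy_simplex V \<rho>. \<forall>y\<in>strategy_simplex V \<rho>. welfare V p y \<le> welfare V p x"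
    using assms(1-3) by (intro continuous_attains_sup compact_strategy_simplex strategy_simplex_nonempty)
  then show ?thesis using that by blast
qed

text \<open>The Karush-Kuhn-Tucker conditions for maximising the welfare over the simplex: the
  multiplier is the common value of the marginal payoffs on the support.\<close>

definition kkt_point :: "'a set \<Rightarrow> ('a \<Rightarrow> real \<Rightarrow> real) \<Rightarrow> real \<Rightarrow> ('a \<Rightarrow> real) \<Rightarrow> bool" where
  "kkt_point V u \<rho> x \<longleftrightarrow> x \<in> strategy_simplex V \<rho> \<and>
     (\<forall>i\<in>support_on V x. \<forall>j\<in>V. u j (x j) \<le> u i (x i))"

lemma maximizer_imp_kkt_point:
  assumes "finite V"
    and der: "\<And>i x. i \<in> V \<Longrightarrow> 0 \<le> x \<Longrightarrow> (p i has_real_derivative u i x) (at x within {0..})"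
    and x: "x \<in> strategy_simplex V \<rho>"
    and max: "\<And>y. y \<in> strategy_simplex V \<rho> \<Longrightarrow> welfare V p y \<le> welfare V p x"
  shows "kkt_point V u \<rho> x"
  unfolding kkt_point_def
proof (intro conjI ballI x)
  fix i j assume i: "i \<in> support_on V x" and "j \<in> V"
  then have "i \<in> V" and "0 < x i"
    using strategy_simplex_nonneg[OF x, of i] by (auto simp: support_on_def)
  show "u j (x j) \<le> u i (x i)"
  proof (rule ccontr)
    assume "\<not> u j (x j) \<le> u i (x i)"
    then have "i \<noteq> j" by auto
    define g where "g t = p i (x i + t * -1) + p j (x j + t * 1)" for t
    have welfare_transfer:
      "welfare V p (x(i := x i - t, j := x j + t)) = welfare V p x - g 0 + g t" for t
      using sum_fun_upd_two[OF \<open>finite V\<close> \<open>i \<in> V\<close> \<open>j \<in> V\<close> \<open>i \<noteq> j\<close>, of "\<lambda>k r. p k r - p k 0"]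
      by (simp add: welfare_def g_def)
    have "(g has_real_derivative u i (x i) * -1 + u j (x j) * 1) (at 0 within {0..x i})"
      unfolding g_def
      by (intro DERIV_add DERIV_compose_affine[where A = "{0..}"])
         (use der[OF \<open>i \<in> V\<close>] der[OF \<open>j \<in> V\<close>] strategy_simplex_nonneg[OF x] in auto)
    moreover have "0 < u i (x i) * -1 + u j (x j) * 1"
      using \<open>\<not> u j (x j) \<le> u i (x i)\<close> by simp
    ultimately obtain d where "d > 0"
      and inc: "\<forall>h>0. 0 + h \<in> {0..x i} \<longrightarrow> h < d \<longrightarrow> g 0 < g (0 + h)"
      by (blast dest: has_real_derivative_pos_inc_right)
    define h where "h = min (d / 2) (x i)"
    have "0 < h" "h < d" "h \<le> x i" using \<open>d > 0\<close> \<open>0 < x i\<close> by (auto simp: h_def)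
    then have "welfare V p x < welfare V p (x(i := x i - h, j := x j + h))"
      using inc welfare_transfer[of h] by auto
    moreover have "x(i := x i - h, j := x j + h) \<in> strategy_simplex V \<rho>"
      by (rule strategy_simplex_transfer)
         (use x \<open>finite V\<close> \<open>i \<in> V\<close> \<open>j \<in> V\<close> \<open>i \<noteq> j\<close> \<open>0 < h\<close> \<open>h \<le> x i\<close> in auto)
    ultimately show False using max by fastforce
  qed
qed

lemma kkt_point_first_order:
  assumes "finite V" and kkt: "kkt_point V u \<rho> x" and y: "y \<in> strategy_simplex V \<rho>"
  shows "(\<Sum>i\<in>V. u i (x i) * (y i - x i)) \<le> 0"
proof (cases "support_on V x = {}")
  case True
  then have "\<forall>i\<in>V. x i = 0" by (auto simp: support_on_def)
  moreover from this have "\<forall>i\<in>V. y i = 0"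
    using kkt y \<open>finite V\<close> sum_nonneg_eq_0_iff[of V y]
    by (auto simp: kkt_point_def strategy_simplex_def)
  ultimately show ?thesis by simp
next
  case False
  then obtain m where m: "m \<in> support_on V x" by blast
  define lam where "lam = u m (x m)"
  have "u i (x i) * (y i - x i) \<le> lam * (y i - x i)" if "i \<in> V" for i
  proof (cases "x i = 0")
    case True
    have "u i (x i) \<le> lam" using kkt m that by (simp add: kkt_point_def lam_def)
    then show ?thesis
      using True strategy_simplex_nonneg[OF y, of i] by (simp add: mult_right_mono)
  next
    case False
    then have "u i (x i) = lam"
      using kkt m that unfolding kkt_point_def lam_def support_on_def by (blast intro: order_antisym)
    then show ?thesis by simp
  qed
  then have "(\<Sum>i\<in>V. u i (x i) * (y i - x i)) \<le> (\<Sum>i\<in>V. lam * (y i - x i))"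
    by (rule sum_mono)
  also have "\<dots> = lam * ((\<Sum>i\<in>V. y i) - (\<Sum>i\<in>V. x i))"
    by (simp add: sum_distrib_left sum_subtractf right_diff_distrib)
  also have "\<dots> = 0"
    using kkt y by (simp add: kkt_point_def strategy_simplex_def)
  finally show ?thesis .
qed

lemma kkt_point_welfare_less:
  assumes "finite V"
    and der: "\<And>i x. i \<in> V \<Longrightarrow> 0 \<le> x \<Longrightarrow> (p i has_real_derivative u i x) (at x within {0..})"
    and conc: "\<And>i. i \<in> V \<Longrightarrow> strictly_concave_on {0..} (p i)"
    and kkt: "kkt_point V u \<rho> x" and y: "y \<in> strategy_simplex V \<rho>" and "y \<noteq> x"
  shows "welfare V p y < welfare V p x"
proof -
  have x: "x \<in> strategy_simplex V \<rho>" using kkt by (simp add: kkt_point_def)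
  obtain k where "y k \<noteq> x k" using \<open>y \<noteq> x\<close> by blast
  then have "k \<in> V" using x y unfolding strategy_simplex_def by fastforce
  have tangent: "p i (y i) \<le> p i (x i) + u i (x i) * (y i - x i)" if "i \<in> V" for i
    using strictly_concave_on_tangent_le[OF conc der] that
      strategy_simplex_nonneg[OF x] strategy_simplex_nonneg[OF y] by blast
  have "p k (y k) < p k (x k) + u k (x k) * (y k - x k)"
    using strictly_concave_on_tangent_less[OF conc der] \<open>k \<in> V\<close> \<open>y k \<noteq> x k\<close>
      strategy_simplex_nonneg[OF x] strategy_simplex_nonneg[OF y] by blast
  then have "welfare V p y < (\<Sum>i\<in>V. (p i (x i) - p i 0) + u i (x i) * (y i - x i))"
    unfolding welfare_def using tangent \<open>k \<in> V\<close>
    by (intro sum_strict_mono_ex1[OF \<open>finite V\<close>]) force+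
  also have "\<dots> = welfare V p x + (\<Sum>i\<in>V. u i (x i) * (y i - x i))"
    by (simp add: welfare_def sum.distrib)
  also have "\<dots> \<le> welfare V p x"
    using kkt_point_first_order[OF \<open>finite V\<close> kkt y] by simp
  finally show ?thesis .
qed

lemma kkt_point_unique:
  assumes "finite V"
    and der: "\<And>i x. i \<in> V \<Longrightarrow> 0 \<le> x \<Longrightarrow> (p i has_real_derivative u i x) (at x within {0..})"
    and conc: "\<And>i. i \<in> V \<Longrightarrow> strictly_concave_on {0..} (p i)"
    and "kkt_point V u \<rho> x" "kkt_point V u \<rho> z"
  shows "z = x"
proof (rule ccontr)
  assume "z \<noteq> x"
  then have "welfare V p z < welfare V p x" "welfare V p x < welfare V p z"
    using kkt_point_welfare_less[OF assms(1-3)] assms(4,5) by (auto simp: kkt_point_def)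
  then show False by simp
qed

lemma kkt_point_imp_nash_eq: "kkt_point V u \<rho> x \<Longrightarrow> x \<in> nash_eq V E u \<rho>"
  by (auto simp: kkt_point_def nash_eq_def neighbours_def)

lemma quasi_concave_path_min_ends_le:
  assumes "quasi_concave_path a ps" "k \<in> set ps"
  shows "min (a (hd ps)) (a (last ps)) \<le> a k"
proof -
  obtain m where "m < length ps" "k = ps ! m" using assms(2) by (auto simp: in_set_conv_nth)
  moreover have "ps \<noteq> []" using assms(2) by auto
  then have "hd ps = ps ! 0" "last ps = ps ! (length ps - 1)"
    by (simp_all add: hd_conv_nth last_conv_nth)
  moreover have "0 \<le> m \<and> m \<le> length ps - 1 \<and> length ps - 1 < length ps"
    using \<open>m < length ps\<close> by auto
  ultimately show ?thesis
    using assms(1) unfolding quasi_concave_path_def by metis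
qed

lemma nash_eq_marginal_le_along_path:
  assumes x: "x \<in> nash_eq V E u \<rho>" and ps: "is_path V E ps"
    and start: "u (hd ps) (x (hd ps)) \<le> L" and above: "\<And>k. k \<in> set ps \<Longrightarrow> L < u k 0"
  shows "u (last ps) (x (last ps)) \<le> L"
proof -
  have "u (ps ! m) (x (ps ! m)) \<le> L" if "m < length ps" for m
    using that
  proof (induction m)
    case 0
    then show ?case using start by (simp add: hd_conv_nth)
  next
    case (Suc m)
    then have IH: "u (ps ! m) (x (ps ! m)) \<le> L" by simp
    have "ps ! m \<in> V" "ps ! Suc m \<in> V" "E (ps ! m) (ps ! Suc m)"
      using ps Suc.prems by (auto simp: is_path_def)
    moreover have "x (ps ! m) \<noteq> 0"
      using IH above[of "ps ! m"] Suc.prems by fastforce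
    ultimately have "u (ps ! Suc m) (x (ps ! Suc m)) \<le> u (ps ! m) (x (ps ! m))"
      using x by (auto simp: nash_eq_def support_on_def neighbours_def)
    with IH show ?case by simp
  qed
  then show ?thesis
    using ps by (simp add: is_path_def last_conv_nth)
qed

lemma nash_eq_imp_kkt_point:
  assumes dec: "\<And>i s t. i \<in> V \<Longrightarrow> 0 \<le> s \<Longrightarrow> s < t \<Longrightarrow> u i t < u i s"
    and qch: "quasi_concave_hill V E (\<lambda>i. u i 0)"
    and x: "x \<in> nash_eq V E u \<rho>"
  shows "kkt_point V u \<rho> x"
  unfolding kkt_point_def
proof (intro conjI ballI)
  show xS: "x \<in> strategy_simplex V \<rho>" using x by (simp add: nash_eq_def)
  fix i j assume i: "i \<in> support_on V x" and "j \<in> V"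
  then have "i \<in> V" and "0 < x i"
    using strategy_simplex_nonneg[OF xS, of i] by (auto simp: support_on_def)
  show "u j (x j) \<le> u i (x i)"
  proof (rule ccontr)
    assume "\<not> u j (x j) \<le> u i (x i)"
    then have "i \<noteq> j" by auto
    then obtain ps where ps: "is_path V E ps" "hd ps = i" "last ps = j"
      and qc: "quasi_concave_path (\<lambda>i. u i 0) ps"
      using qch \<open>i \<in> V\<close> \<open>j \<in> V\<close> unfolding quasi_concave_hill_def by blast
    have "u i (x i) < u i 0" using dec[OF \<open>i \<in> V\<close> _ \<open>0 < x i\<close>] by simp
    moreover have "u j (x j) \<le> u j 0"
      using dec[OF \<open>j \<in> V\<close>, of 0 "x j"] strategy_simplex_nonneg[OF xS, of j]
      by (cases "x j = 0") auto
    ultimately have "u i (x i) < u k 0" if "k \<in> set ps" for k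
      using quasi_concave_path_min_ends_le[OF qc that] ps(2,3) \<open>\<not> u j (x j) \<le> u i (x i)\<close>
      by (simp add: min_def split: if_splits)
    then have "u j (x j) \<le> u i (x i)"
      using nash_eq_marginal_le_along_path[OF x ps(1)] ps(2,3) by blast
    with \<open>\<not> u j (x j) \<le> u i (x i)\<close> show False ..
  qed
qed

theorem mainTheorem3:
  fixes V :: "'a set" and E :: "'a \<Rightarrow> 'a \<Rightarrow> bool"
    and p u u' :: "'a \<Rightarrow> real \<Rightarrow> real" and \<rho> :: real
  assumes finV: "finite V" and neV: "V \<noteq> {}"
    and symE: "\<And>i j. E i j \<Longrightarrow> E j i"
    and irrE: "\<And>i. \<not> E i i"
    and conn: "graph_connected V E"
    and dp: "\<And>i x. i \<in> V \<Longrightarrow> 0 \<le> x \<Longrightarrow> (p i has_real_derivative u i x) (at x within {0..})"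
    and du: "\<And>i x. i \<in> V \<Longrightarrow> 0 \<le> x \<Longrightarrow> (u i has_real_derivative u' i x) (at x within {0..})"
    and cu': "\<And>i. i \<in> V \<Longrightarrow> continuous_on {0..} (u' i)"
    and conc: "\<And>i. i \<in> V \<Longrightarrow> strictly_concave_on {0..} (p i)"
    and rho: "0 \<le> \<rho>"
    and qch: "quasi_concave_hill V E (\<lambda>i. u i 0)"
  shows "\<exists>x. nash_eq V E u \<rho> = {x} \<and> x \<in> strategy_simplex V \<rho> \<and>
           (\<forall>y\<in>strategy_simplex V \<rho>. y \<noteq> x \<longrightarrow>
              (\<Sum>i\<in>V. p i (y i) - p i 0) < (\<Sum>i\<in>V. p i (x i) - p i 0))"
proof -
  have "continuous_on {0..} (p i)" if "i \<in> V" for i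
    using dp[OF that] by (intro DERIV_continuous_on) simp
  then obtain x where x: "x \<in> strategy_simplex V \<rho>"
    and max: "\<And>y. y \<in> strategy_simplex V \<rho> \<Longrightarrow> welfare V p y \<le> welfare V p x"
    using welfare_attains_max[OF finV neV rho] by blast
  have kkt: "kkt_point V u \<rho> x"
    by (rule maximizer_imp_kkt_point[OF finV dp x max])
  have dec: "u i t < u i s" if "i \<in> V" "0 \<le> s" "s < t" for i s t
    using strictly_concave_on_deriv_less[OF conc dp] that by blast
  have "nash_eq V E u \<rho> = {x}"
    using kkt_point_imp_nash_eq[OF kkt] nash_eq_imp_kkt_point[where u = u, OF dec qch]
      kkt_point_unique[OF finV dp conc kkt] by blast
  then show ?thesis
    using x kkt_point_welfare_less[OF finV dp conc kkt] unfolding welfare_def by blast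
qed

end
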